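(* Let $\psi\in C^1(\mathbb{R})$ satisfy: $\psi(0)=1$, $\psi$ is even, there exist $C>0$ and $\delta>1$ with $|\psi(x)|+|x\psi'(x)|\leq C\langle x\rangle^{-\delta}$ for all $x\in\mathbb{R}$, and $A_\psi:=\int_{\mathbb{R}}\psi(x)\,\mathrm{d}x\neq 0$. Let $\mu$ be a probability measure on $\mathbb{R}$ and $0\le\alpha\le 1$. Then $C^\alpha_{\mu,\psi}(x)$ is finite for any $x$ for which $D^\alpha_\mu(x)$ is finite; and, if $\psi$ is non-negative, then for each $x$, $C^\alpha_{\mu,\psi}(x)$ and $D^\alpha_\mu(x)$ are both finite or both infinite.
   Context: $\langle x\rangle=(1+x^2)^{1/2}$. For $a>0$, $\psi_a(x)=\psi(x/a)$ and $(\psi_a*\mu)(x)=\int\psi_a(x-y)\,\mathrm{d}\mu(y)$. Define $C^\alpha_{\mu,\psi}(x)=\limsup_{a\to0}\frac{(\psi_a*\mu)(x)}{a^\alpha}$ and $D^\alpha_\mu(x)=\limsup_{\varepsilon\to0}\frac{\mu((x-\varepsilon,x+\varepsilon))}{(2\varepsilon)^\alpha}$ (limits over positive $a,\varepsilon$). *)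

theory Defs
  imports "HOL-Probability.Probability"
begin

definition jbr :: "real \<Rightarrow> real" where
  "jbr x = (1 + x\<^sup>2) powr (1/2)"

definition conv_dil :: "(real \<Rightarrow> real) \<Rightarrow> real \<Rightarrow> real measure \<Rightarrow> real \<Rightarrow> real" where
  "conv_dil \<psi> a \<mu> x = (\<integral>y. \<psi> ((x - y) / a) \<partial>\<mu>)"

definition C_alpha :: "real \<Rightarrow> real measure \<Rightarrow> (real \<Rightarrow> real) \<Rightarrow> real \<Rightarrow> ereal" where
  "C_alpha \<alpha> \<mu> \<psi> x = Limsup (at_right 0) (\<lambda>a. ereal (conv_dil \<psi> a \<mu> x / a powr \<alpha>))"

definition D_alpha :: "real \<Rightarrow> real measure \<Rightarrow> real \<Rightarrow> ereal" where
  "D_alpha \<alpha> \<mu> x = Limsup (at_right 0)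
     (\<lambda>\<epsilon>. ereal (measure \<mu> {x - \<epsilon> <..< x + \<epsilon>} / (2 * \<epsilon>) powr \<alpha>))"

end

theory Submission
  imports Defs
begin

(*
  Finiteness of D gives mu (x - r, x + r) <= K r^alpha for small r, hence for all r > 0 since mu
  is finite. On the dyadic ball |x - y| < 2^k a we have |psi ((x - y) / a)| <= C 2^delta 2^(-k delta),
  which bounds |(psi_a * mu)(x)| by C 2^delta K a^alpha times the geometric series of
  2^(k (alpha - delta)), convergent because alpha <= 1 < delta.
  Conversely, if psi >= 0 then psi >= psi(0)/2 on some (-eta, eta), so
  (psi_a * mu)(x) >= psi(0)/2 * mu (x - eta a, x + eta a); with eps = eta a, a bound on the
  quotient defining C becomes a bound on the quotient defining D.
*)

lemma abs_Limsup_ereal_neq_infinity: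
  fixes f :: "'a \<Rightarrow> real"
  assumes "F \<noteq> bot" and "eventually (\<lambda>a. \<bar>f a\<bar> \<le> B) F"
  shows "\<bar>Limsup F (\<lambda>a. ereal (f a))\<bar> \<noteq> \<infinity>"
proof -
  have "eventually (\<lambda>a. ereal (f a) \<le> ereal B) F"
    using assms(2) by (rule eventually_mono) simp
  then have upper: "Limsup F (\<lambda>a. ereal (f a)) \<le> ereal B" by (rule Limsup_bounded)
  have "eventually (\<lambda>a. ereal (- B) \<le> ereal (f a)) F"
    using assms(2) by (rule eventually_mono) simp
  then have lower: "ereal (- B) \<le> Limsup F (\<lambda>a. ereal (f a))" by (rule le_Limsup[OF assms(1)])
  show ?thesis using upper lower by (cases "Limsup F (\<lambda>a. ereal (f a))") auto
qed

lemma eventually_bounded_if_Limsup_ereal_neq_PInfty: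
  fixes f :: "'a \<Rightarrow> real"
  assumes "Limsup F (\<lambda>a. ereal (f a)) \<noteq> \<infinity>"
  obtains M where "eventually (\<lambda>a. f a \<le> M) F"
proof -
  obtain n :: nat where "Limsup F (\<lambda>a. ereal (f a)) < ereal (real n)"
    using less_PInf_Ex_of_nat[THEN iffD1, OF assms] ..
  from Limsup_lessD[OF this] have "eventually (\<lambda>a. f a \<le> real n) F"
    by (rule eventually_mono) simp
  then show ?thesis by (rule that)
qed

lemma jbr_eq_sqrt: "jbr t = sqrt (1 + t\<^sup>2)"
  unfolding jbr_def by (simp add: powr_half_sqrt add_nonneg_nonneg)

lemma one_le_jbr: "1 \<le> jbr t"
  unfolding jbr_eq_sqrt by simp

lemma abs_le_jbr: "\<bar>t\<bar> \<le> jbr t"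
  unfolding jbr_eq_sqrt by (metis le_add_same_cancel2 real_sqrt_abs real_sqrt_le_mono zero_le_one)

lemma jbr_powr_neg_le_one: "0 \<le> \<delta> \<Longrightarrow> jbr t powr (- \<delta>) \<le> 1"
  using ge_one_powr_ge_zero[OF one_le_jbr, of \<delta> t] by (simp add: powr_minus divide_simps)

lemma jbr_powr_neg_le_dyadic:
  fixes t \<delta> :: real
  assumes "0 \<le> \<delta>"
  obtains k :: nat where "\<bar>t\<bar> < 2 ^ k" and "jbr t powr (- \<delta>) \<le> 2 powr \<delta> * (2 powr (- \<delta>)) ^ k"
proof (cases "\<bar>t\<bar> < 1")
  case True
  have "jbr t powr (- \<delta>) \<le> 1" using assms by (rule jbr_powr_neg_le_one)
  also have "1 \<le> 2 powr \<delta>" using assms by (intro ge_one_powr_ge_zero) auto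
  finally show ?thesis using True by (intro that[of 0]) simp_all
next
  case False
  define k where "k = (LEAST k::nat. \<bar>t\<bar> < 2 ^ k)"
  have "\<exists>k::nat. \<bar>t\<bar> < 2 ^ k" using real_arch_pow[of 2 "\<bar>t\<bar>"] by simp
  then have t_less: "\<bar>t\<bar> < 2 ^ k" unfolding k_def by (rule LeastI_ex)
  have k_pos: "k \<noteq> 0" using t_less False by (cases k) auto
  have t_ge: "2 ^ (k - 1) \<le> \<bar>t\<bar>"
    using not_less_Least[of "k - 1" "\<lambda>k. \<bar>t\<bar> < 2 ^ k"] k_pos unfolding k_def[symmetric] by linarith
  have "jbr t powr (- \<delta>) \<le> \<bar>t\<bar> powr (- \<delta>)"
    using abs_le_jbr[of t] False assms by (intro powr_mono2') auto
  also have "\<dots> \<le> (2 ^ (k - 1)) powr (- \<delta>)"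
    using t_ge assms by (intro powr_mono2') auto
  also have "\<dots> = 2 powr (real (k - 1) * (- \<delta>))"
    by (simp add: powr_realpow[symmetric] powr_powr)
  also have "\<dots> = 2 powr \<delta> * (2 powr (- \<delta>)) ^ k"
    using k_pos by (simp add: powr_power powr_add[symmetric] of_nat_diff algebra_simps)
  finally show ?thesis by (rule that[OF t_less])
qed

lemma jbr_decay_const_nonneg:
  assumes "\<forall>t. \<bar>\<psi> t\<bar> \<le> Cp * jbr t powr (- \<delta>)"
  shows "0 \<le> Cp"
proof -
  have "0 < jbr 0 powr (- \<delta>)" using one_le_jbr[of 0] by simp
  moreover have "0 \<le> Cp * jbr 0 powr (- \<delta>)"
    using assms[rule_format, of 0] by (rule order.trans[OF abs_ge_zero])
  ultimately show ?thesis by (simp add: zero_le_mult_iff)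
qed

lemma abs_le_const_if_jbr_decay:
  assumes "\<forall>t. \<bar>\<psi> t\<bar> \<le> Cp * jbr t powr (- \<delta>)" and "0 \<le> \<delta>"
  shows "\<bar>\<psi> t\<bar> \<le> Cp"
proof -
  have "\<bar>\<psi> t\<bar> \<le> Cp * jbr t powr (- \<delta>)" using assms(1) by blast
  also have "\<dots> \<le> Cp * 1"
    by (rule mult_left_mono[OF jbr_powr_neg_le_one[OF assms(2)] jbr_decay_const_nonneg[OF assms(1)]])
  finally show ?thesis by simp
qed

lemma abs_dilation_le_dyadic_series:
  fixes \<psi> :: "real \<Rightarrow> real"
  assumes psi: "\<forall>t. \<bar>\<psi> t\<bar> \<le> Cp * jbr t powr (- \<delta>)" and "0 \<le> \<delta>" and "0 < a"
  shows "ennreal \<bar>\<psi> ((x - y) / a)\<bar> \<le>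
    (\<Sum>k. ennreal (Cp * 2 powr \<delta> * (2 powr (- \<delta>)) ^ k) * indicator {x - 2 ^ k * a <..< x + 2 ^ k * a} y)"
    (is "_ \<le> suminf ?term")
proof -
  have single_le_suminf: "g k \<le> suminf g" for g :: "nat \<Rightarrow> ennreal" and k
    using sum_le_suminf[OF summableI, of "{k}" g] by simp
  obtain k where k: "\<bar>(x - y) / a\<bar> < 2 ^ k"
    "jbr ((x - y) / a) powr (- \<delta>) \<le> 2 powr \<delta> * (2 powr (- \<delta>)) ^ k"
    using jbr_powr_neg_le_dyadic[OF assms(2)] by blast
  have "\<bar>\<psi> ((x - y) / a)\<bar> \<le> Cp * jbr ((x - y) / a) powr (- \<delta>)" using psi by blast
  also have "\<dots> \<le> Cp * 2 powr \<delta> * (2 powr (- \<delta>)) ^ k"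
    using k(2) jbr_decay_const_nonneg[OF psi] by (simp add: mult.assoc mult_left_mono)
  finally have "\<bar>\<psi> ((x - y) / a)\<bar> \<le> Cp * 2 powr \<delta> * (2 powr (- \<delta>)) ^ k" .
  moreover have "y \<in> {x - 2 ^ k * a <..< x + 2 ^ k * a}"
    using k(1) \<open>0 < a\<close> by (auto simp: abs_less_iff field_simps)
  ultimately have "ennreal \<bar>\<psi> ((x - y) / a)\<bar> \<le> ?term k"
    by (simp add: ennreal_leI)
  also have "\<dots> \<le> suminf ?term" by (rule single_le_suminf)
  finally show ?thesis .
qed

lemma nn_integral_abs_dilation_le_dyadic_series:
  fixes \<mu> :: "real measure" and \<psi> :: "real \<Rightarrow> real"
  assumes "sets \<mu> = sets borel"
    and "\<forall>t. \<bar>\<psi> t\<bar> \<le> Cp * jbr t powr (- \<delta>)" and "0 \<le> \<delta>" and "0 < a"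
  shows "(\<integral>\<^sup>+ y. ennreal \<bar>\<psi> ((x - y) / a)\<bar> \<partial>\<mu>) \<le>
    (\<Sum>k. ennreal (Cp * 2 powr \<delta> * (2 powr (- \<delta>)) ^ k) * emeasure \<mu> {x - 2 ^ k * a <..< x + 2 ^ k * a})"
proof -
  have "(\<integral>\<^sup>+ y. ennreal \<bar>\<psi> ((x - y) / a)\<bar> \<partial>\<mu>) \<le> (\<integral>\<^sup>+ y. (\<Sum>k.
      ennreal (Cp * 2 powr \<delta> * (2 powr (- \<delta>)) ^ k) * indicator {x - 2 ^ k * a <..< x + 2 ^ k * a} y) \<partial>\<mu>)"
    using abs_dilation_le_dyadic_series[OF assms(2-4)] by (intro nn_integral_mono) simp
  also have "\<dots> = (\<Sum>k. ennreal (Cp * 2 powr \<delta> * (2 powr (- \<delta>)) ^ k) * emeasure \<mu> {x - 2 ^ k * a <..< x + 2 ^ k * a})"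
    using assms(1) by (simp add: nn_integral_suminf nn_integral_cmult_indicator)
  finally show ?thesis .
qed

lemma abs_conv_dil_le_powr:
  fixes \<mu> :: "real measure" and \<psi> :: "real \<Rightarrow> real"
  assumes "finite_measure \<mu>" and sets_mu: "sets \<mu> = sets borel"
    and "0 \<le> \<alpha>" and "\<alpha> < \<delta>"
    and psi: "\<forall>t. \<bar>\<psi> t\<bar> \<le> Cp * jbr t powr (- \<delta>)"
    and ball: "\<forall>r>0. measure \<mu> {x - r <..< x + r} \<le> K * r powr \<alpha>"
    and "0 < a"
  shows "\<bar>conv_dil \<psi> a \<mu> x\<bar> \<le> Cp * 2 powr \<delta> * K / (1 - 2 powr (\<alpha> - \<delta>)) * a powr \<alpha>"
proof -
  interpret finite_measure \<mu> by fact
  define c where "c k = Cp * 2 powr \<delta> * (2 powr (- \<delta>)) ^ k" for k :: nat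
  define A where "A k = {x - 2 ^ k * a <..< x + 2 ^ k * a}" for k :: nat
  define B where "B = Cp * 2 powr \<delta> * K * a powr \<alpha>"
  define r where "r = (2::real) powr (\<alpha> - \<delta>)"
  have r: "0 \<le> r" "r < 1" unfolding r_def using \<open>\<alpha> < \<delta>\<close> by (auto intro: powr_less_one)
  have "0 \<le> Cp" using psi by (rule jbr_decay_const_nonneg)
  then have c_nonneg: "0 \<le> c k" for k unfolding c_def by simp
  have "0 \<le> K" using ball[rule_format, of 1] by (simp add: order.trans[OF measure_nonneg])
  have term_le: "c k * measure \<mu> (A k) \<le> B * r ^ k" for k
  proof -
    have "c k * measure \<mu> (A k) \<le> c k * (K * (2 ^ k * a) powr \<alpha>)"
      using ball \<open>0 < a\<close> c_nonneg unfolding A_def by (intro mult_left_mono) auto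
    also have "(2 ^ k * a) powr \<alpha> = (2 powr \<alpha>) ^ k * a powr \<alpha>"
      using \<open>0 < a\<close> by (simp add: powr_mult powr_power powr_realpow[symmetric] powr_powr mult.commute)
    also have "c k * (K * ((2 powr \<alpha>) ^ k * a powr \<alpha>)) = B * ((2 powr (- \<delta>)) ^ k * (2 powr \<alpha>) ^ k)"
      unfolding c_def B_def by (simp only: mult_ac)
    also have "(2 powr (- \<delta>)) ^ k * (2 powr \<alpha>) ^ k = r ^ k"
      by (simp add: r_def power_mult_distrib[symmetric] powr_add[symmetric])
    finally show ?thesis .
  qed
  have "(\<integral>\<^sup>+ y. ennreal \<bar>\<psi> ((x - y) / a)\<bar> \<partial>\<mu>) \<le> (\<Sum>k. ennreal (c k) * emeasure \<mu> (A k))"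
    unfolding c_def A_def
    using nn_integral_abs_dilation_le_dyadic_series[OF sets_mu psi _ \<open>0 < a\<close>] \<open>0 \<le> \<alpha>\<close> \<open>\<alpha> < \<delta>\<close>
    by simp
  also have "\<dots> \<le> (\<Sum>k. ennreal (B * r ^ k))"
    using term_le c_nonneg
    by (intro suminf_le summableI) (simp add: emeasure_eq_measure ennreal_mult[symmetric] ennreal_leI)
  also have "\<dots> = ennreal (B / (1 - r))"
  proof (rule suminf_ennreal_eq)
    show "0 \<le> B * r ^ k" for k using \<open>0 \<le> Cp\<close> \<open>0 \<le> K\<close> r by (simp add: B_def)
    show "(\<lambda>k. B * r ^ k) sums (B / (1 - r))" using sums_mult[OF geometric_sums, of r B] r by simp
  qed
  finally have "(\<integral>y. \<bar>\<psi> ((x - y) / a)\<bar> \<partial>\<mu>) \<le> B / (1 - r)"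
    using \<open>0 \<le> Cp\<close> \<open>0 \<le> K\<close> r by (intro integral_real_bounded) (auto simp: B_def)
  then have "\<bar>conv_dil \<psi> a \<mu> x\<bar> \<le> B / (1 - r)"
    unfolding conv_dil_def by (rule order.trans[OF integral_abs_bound])
  then show ?thesis by (simp add: B_def r_def)
qed

lemma measure_ball_le_powr_if_D_alpha_finite:
  fixes \<mu> :: "real measure"
  assumes "finite_measure \<mu>" and "0 \<le> \<alpha>" and "D_alpha \<alpha> \<mu> x \<noteq> \<infinity>"
  obtains K where "\<forall>r>0. measure \<mu> {x - r <..< x + r} \<le> K * r powr \<alpha>"
proof -
  interpret finite_measure \<mu> by fact
  obtain M where "eventually (\<lambda>\<epsilon>. measure \<mu> {x - \<epsilon> <..< x + \<epsilon>} / (2 * \<epsilon>) powr \<alpha> \<le> M) (at_right 0)"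
    using assms(3) unfolding D_alpha_def by (rule eventually_bounded_if_Limsup_ereal_neq_PInfty)
  then obtain b where "0 < b"
    and small: "\<And>\<epsilon>. 0 < \<epsilon> \<Longrightarrow> \<epsilon> < b \<Longrightarrow> measure \<mu> {x - \<epsilon> <..< x + \<epsilon>} / (2 * \<epsilon>) powr \<alpha> \<le> M"
    unfolding eventually_at_right_field by auto
  define K where "K = \<bar>M\<bar> * 2 powr \<alpha> + measure \<mu> (space \<mu>) * b powr (- \<alpha>)"
  have "measure \<mu> {x - r <..< x + r} \<le> K * r powr \<alpha>" if "0 < r" for r
  proof (cases "r < b")
    case True
    have "measure \<mu> {x - r <..< x + r} \<le> M * (2 * r) powr \<alpha>"
      using small[OF \<open>0 < r\<close> True] \<open>0 < r\<close> by (simp add: divide_simps)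
    also have "\<dots> \<le> \<bar>M\<bar> * 2 powr \<alpha> * r powr \<alpha>"
      using \<open>0 < r\<close> by (simp add: powr_mult mult_right_mono)
    also have "\<dots> \<le> K * r powr \<alpha>" unfolding K_def by (intro mult_right_mono) auto
    finally show ?thesis .
  next
    case False
    have "measure \<mu> {x - r <..< x + r} \<le> measure \<mu> (space \<mu>)" by (rule bounded_measure)
    also have "\<dots> \<le> measure \<mu> (space \<mu>) * (r / b) powr \<alpha>"
    proof -
      have "1 \<le> (r / b) powr \<alpha>" using False \<open>0 < b\<close> \<open>0 \<le> \<alpha>\<close> by (intro ge_one_powr_ge_zero) auto
      then show ?thesis using mult_left_mono[OF _ measure_nonneg] by fastforce
    qed
    also have "\<dots> = measure \<mu> (space \<mu>) * b powr (- \<alpha>) * r powr \<alpha>"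
      using \<open>0 < b\<close> \<open>0 < r\<close> by (simp add: powr_divide powr_minus divide_simps)
    also have "\<dots> \<le> K * r powr \<alpha>" unfolding K_def by (intro mult_right_mono) auto
    finally show ?thesis .
  qed
  then show ?thesis by (intro that allI impI)
qed

lemma integrable_dilation:
  fixes \<mu> :: "real measure" and \<psi> :: "real \<Rightarrow> real"
  assumes "finite_measure \<mu>" and sets_mu: "sets \<mu> = sets borel"
    and cont: "continuous_on UNIV \<psi>" and bounded: "\<And>t. \<bar>\<psi> t\<bar> \<le> B"
  shows "integrable \<mu> (\<lambda>y. \<psi> ((x - y) / a))"
proof -
  interpret finite_measure \<mu> by fact
  show ?thesis
  proof (rule integrable_const_bound)
    have "continuous_on UNIV (\<lambda>y. \<psi> ((x - y) * inverse a))"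
      by (intro continuous_on_compose2[OF cont] continuous_intros) auto
    then show "(\<lambda>y. \<psi> ((x - y) / a)) \<in> borel_measurable \<mu>"
      unfolding measurable_cong_sets[OF sets_mu refl] divide_inverse by (rule borel_measurable_continuous_onI)
    show "AE y in \<mu>. norm (\<psi> ((x - y) / a)) \<le> B" by (simp add: bounded)
  qed
qed

lemma measure_ball_le_conv_dil:
  fixes \<mu> :: "real measure" and \<psi> :: "real \<Rightarrow> real"
  assumes "finite_measure \<mu>" and sets_mu: "sets \<mu> = sets borel"
    and nonneg: "\<forall>t. 0 \<le> \<psi> t" and near_0: "\<forall>t. \<bar>t\<bar> < \<eta> \<longrightarrow> c \<le> \<psi> t"
    and integrable: "integrable \<mu> (\<lambda>y. \<psi> ((x - y) / a))" and "0 < a"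
  shows "c * measure \<mu> {x - \<eta> * a <..< x + \<eta> * a} \<le> conv_dil \<psi> a \<mu> x"
proof -
  interpret finite_measure \<mu> by fact
  let ?S = "{x - \<eta> * a <..< x + \<eta> * a}"
  have S: "?S \<in> sets \<mu>" using sets_mu by simp
  have "(\<integral>y. c * indicator ?S y \<partial>\<mu>) \<le> (\<integral>y. \<psi> ((x - y) / a) \<partial>\<mu>)"
  proof (rule integral_mono[OF _ integrable])
    show "integrable \<mu> (\<lambda>y. c * indicator ?S y)"
      using S emeasure_finite[of ?S] by (simp add: less_top[symmetric])
    show "c * indicator ?S y \<le> \<psi> ((x - y) / a)" for y
    proof (cases "y \<in> ?S")
      case True
      then have "\<bar>(x - y) / a\<bar> < \<eta>" using \<open>0 < a\<close> by (auto simp: abs_less_iff field_simps)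
      then show ?thesis using near_0 True by simp
    next
      case False
      then show ?thesis using nonneg by simp
    qed
  qed
  then show ?thesis using S unfolding conv_dil_def by simp
qed

lemma C_alpha_finite_if_D_alpha_finite:
  fixes \<mu> :: "real measure" and \<psi> :: "real \<Rightarrow> real"
  assumes "finite_measure \<mu>" and "sets \<mu> = sets borel" and "0 \<le> \<alpha>" and "\<alpha> < \<delta>"
    and "\<forall>t. \<bar>\<psi> t\<bar> \<le> Cp * jbr t powr (- \<delta>)"
    and "\<bar>D_alpha \<alpha> \<mu> x\<bar> \<noteq> \<infinity>"
  shows "\<bar>C_alpha \<alpha> \<mu> \<psi> x\<bar> \<noteq> \<infinity>"
proof -
  have "D_alpha \<alpha> \<mu> x \<noteq> \<infinity>" using assms(6) by auto
  then obtain K where ball: "\<forall>r>0. measure \<mu> {x - r <..< x + r} \<le> K * r powr \<alpha>"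
    by (rule measure_ball_le_powr_if_D_alpha_finite[OF assms(1,3)])
  define Q where "Q = Cp * 2 powr \<delta> * K / (1 - 2 powr (\<alpha> - \<delta>))"
  have "\<bar>conv_dil \<psi> a \<mu> x / a powr \<alpha>\<bar> \<le> Q" if "0 < a" for a
    using abs_conv_dil_le_powr[OF assms(1-5) ball that] that
    by (simp add: Q_def abs_divide pos_divide_le_eq)
  then have "eventually (\<lambda>a. \<bar>conv_dil \<psi> a \<mu> x / a powr \<alpha>\<bar> \<le> Q) (at_right 0)"
    using eventually_at_right_less by (rule eventually_mono[rotated])
  then show ?thesis
    unfolding C_alpha_def by (intro abs_Limsup_ereal_neq_infinity) simp_all
qed

lemma D_alpha_finite_if_C_alpha_finite:
  fixes \<mu> :: "real measure" and \<psi> :: "real \<Rightarrow> real"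
  assumes "finite_measure \<mu>" and "sets \<mu> = sets borel" and "0 \<le> \<alpha>"
    and nonneg: "\<forall>t. 0 \<le> \<psi> t" and "isCont \<psi> 0" and "0 < \<psi> 0"
    and integrable: "\<forall>a>0. integrable \<mu> (\<lambda>y. \<psi> ((x - y) / a))"
    and "\<bar>C_alpha \<alpha> \<mu> \<psi> x\<bar> \<noteq> \<infinity>"
  shows "\<bar>D_alpha \<alpha> \<mu> x\<bar> \<noteq> \<infinity>"
proof -
  have "C_alpha \<alpha> \<mu> \<psi> x \<noteq> \<infinity>" using assms(8) by auto
  then obtain M where "eventually (\<lambda>a. conv_dil \<psi> a \<mu> x / a powr \<alpha> \<le> M) (at_right 0)"
    unfolding C_alpha_def by (rule eventually_bounded_if_Limsup_ereal_neq_PInfty)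
  then obtain b where "0 < b" and small: "\<And>a. 0 < a \<Longrightarrow> a < b \<Longrightarrow> conv_dil \<psi> a \<mu> x / a powr \<alpha> \<le> M"
    unfolding eventually_at_right_field by auto
  define c where "c = \<psi> 0 / 2"
  have "0 < c" using \<open>0 < \<psi> 0\<close> by (simp add: c_def)
  then obtain \<eta> where "0 < \<eta>" and close: "\<forall>t. dist t 0 < \<eta> \<longrightarrow> dist (\<psi> t) (\<psi> 0) < c"
    using \<open>isCont \<psi> 0\<close> unfolding continuous_at_eps_delta by blast
  have near_0: "\<forall>t. \<bar>t\<bar> < \<eta> \<longrightarrow> c \<le> \<psi> t"
  proof (intro allI impI)
    fix t :: real
    assume "\<bar>t\<bar> < \<eta>"
    then have "\<bar>\<psi> t - \<psi> 0\<bar> < c" using close by (simp add: dist_real_def)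
    then show "c \<le> \<psi> t" unfolding abs_less_iff c_def by linarith
  qed
  define R where "R = \<bar>M\<bar> * \<eta> powr (- \<alpha>) / c"
  have bound: "\<bar>measure \<mu> {x - \<epsilon> <..< x + \<epsilon>} / (2 * \<epsilon>) powr \<alpha>\<bar> \<le> R"
    if "0 < \<epsilon>" "\<epsilon> < b * \<eta>" for \<epsilon>
  proof -
    define a where "a = \<epsilon> / \<eta>"
    have a: "0 < a" "a < b" "\<eta> * a = \<epsilon>" using that \<open>0 < \<eta>\<close> by (auto simp: a_def field_simps)
    have "c * measure \<mu> {x - \<epsilon> <..< x + \<epsilon>} \<le> conv_dil \<psi> a \<mu> x"
      using measure_ball_le_conv_dil[OF assms(1,2) nonneg near_0 _ \<open>0 < a\<close>] integrable a by simp
    also have "\<dots> \<le> M * a powr \<alpha>"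
      using small[OF a(1,2)] a(1) by (simp add: pos_divide_le_eq)
    also have "\<dots> \<le> \<bar>M\<bar> * a powr \<alpha>" by (intro mult_right_mono) auto
    also have "\<dots> = \<bar>M\<bar> * \<eta> powr (- \<alpha>) * \<epsilon> powr \<alpha>"
      using that \<open>0 < \<eta>\<close> by (simp add: a_def powr_divide powr_minus divide_simps)
    also have "\<dots> \<le> \<bar>M\<bar> * \<eta> powr (- \<alpha>) * (2 * \<epsilon>) powr \<alpha>"
      using that \<open>0 \<le> \<alpha>\<close> by (intro mult_left_mono powr_mono2) auto
    finally show ?thesis
      using that \<open>0 < c\<close> by (simp add: R_def abs_divide pos_divide_le_eq pos_le_divide_eq mult_ac)
  qed
  have "0 < b * \<eta>" using \<open>0 < b\<close> \<open>0 < \<eta>\<close> by simp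
  then have "eventually (\<lambda>\<epsilon>. \<bar>measure \<mu> {x - \<epsilon> <..< x + \<epsilon>} / (2 * \<epsilon>) powr \<alpha>\<bar> \<le> R) (at_right 0)"
    unfolding eventually_at_right_field using bound by blast
  then show ?thesis
    unfolding D_alpha_def by (intro abs_Limsup_ereal_neq_infinity) simp_all
qed

theorem theorem2p9:
  fixes \<psi> :: "real \<Rightarrow> real" and \<mu> :: "real measure" and \<alpha> :: real
  assumes C1: "\<psi> C1_differentiable_on UNIV"
    and psi0: "\<psi> 0 = 1"
    and even: "\<And>x. \<psi> (- x) = \<psi> x"
    and decay: "\<exists>C>0. \<exists>\<delta>>1. \<forall>x. \<bar>\<psi> x\<bar> + \<bar>x * deriv \<psi> x\<bar> \<le> C * jbr x powr (- \<delta>)"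
    and A_nz: "(\<integral>x. \<psi> x \<partial>lborel) \<noteq> 0"
    and prob: "prob_space \<mu>"
    and sets_mu: "sets \<mu> = sets borel"
    and alpha: "0 \<le> \<alpha>" "\<alpha> \<le> 1"
  shows "(\<forall>x. \<bar>D_alpha \<alpha> \<mu> x\<bar> \<noteq> \<infinity> \<longrightarrow> \<bar>C_alpha \<alpha> \<mu> \<psi> x\<bar> \<noteq> \<infinity>)
       \<and> ((\<forall>x. 0 \<le> \<psi> x) \<longrightarrow>
            (\<forall>x. \<bar>C_alpha \<alpha> \<mu> \<psi> x\<bar> \<noteq> \<infinity> \<longleftrightarrow> \<bar>D_alpha \<alpha> \<mu> x\<bar> \<noteq> \<infinity>))"
proof -
  interpret prob_space \<mu> by (rule prob)
  obtain Cp \<delta> where "1 < \<delta>" and "\<forall>t. \<bar>\<psi> t\<bar> + \<bar>t * deriv \<psi> t\<bar> \<le> Cp * jbr t powr (- \<delta>)"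
    using decay by blast
  then have psi_decay: "\<forall>t. \<bar>\<psi> t\<bar> \<le> Cp * jbr t powr (- \<delta>)"
    by (meson abs_ge_zero le_add_same_cancel1 order.trans)
  have "\<alpha> < \<delta>" using alpha(2) \<open>1 < \<delta>\<close> by simp
  have cont: "continuous_on UNIV \<psi>" using C1 by (rule C1_differentiable_imp_continuous_on)
  then have "isCont \<psi> 0" by (simp add: continuous_on_eq_continuous_at)
  have "\<bar>\<psi> t\<bar> \<le> Cp" for t using psi_decay \<open>1 < \<delta>\<close> by (intro abs_le_const_if_jbr_decay) auto
  then have integrable: "\<forall>a>0. integrable \<mu> (\<lambda>y. \<psi> ((x - y) / a))" for x
    using integrable_dilation[OF finite_measure_axioms sets_mu cont] by blast
  show ?thesis
    using C_alpha_finite_if_D_alpha_finite[OF finite_measure_axioms sets_mu alpha(1) \<open>\<alpha> < \<delta>\<close> psi_decay]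
      D_alpha_finite_if_C_alpha_finite[OF finite_measure_axioms sets_mu alpha(1) _ \<open>isCont \<psi> 0\<close> _ integrable]
      psi0
    by (intro conjI allI impI iffI) simp_all
qed

end
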